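(* Let $F$ be a vector lattice endowed with a locally solid additive convergence $\eta$, and let $(f_{\alpha})_{\alpha\in A}$ be a net in $F_{+}$. Then $H=\{h\in F:\ |h|\wedge f_{\alpha}\xrightarrow{\eta} 0_{F}\}$ is an ideal of $F$. If $\eta$ is idempotent, then $H$ is closed (i.e., the limit of every $\eta$-convergent net in $H$ lies in $H$).
   Context: A convergence structure on a vector lattice $F$ is locally solid additive if addition and $f\mapsto -f$ are continuous and whenever $|e_\alpha|\le|f_\alpha|$ for all $\alpha$ and $f_\alpha\to 0_F$, then $e_\alpha\to0_F$. A locally solid additive convergence $\eta$ is idempotent if for any nets $(f_{\alpha})_{\alpha\in A},(g_{\beta})_{\beta\in B}\subset F_{+}$ such that $g_{\beta}\xrightarrow[\beta]{\eta} 0_{F}$ and $(f_{\alpha}-g_{\beta})^{+}\xrightarrow[\alpha]{\eta} 0_{F}$ for every $\beta$, it follows that $f_{\alpha}\xrightarrow[\alpha]{\eta} 0_{F}$. *)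

theory Defs
  imports "HOL-Analysis.Analysis"
begin

definition vabs :: "'a::{ordered_real_vector,lattice} \<Rightarrow> 'a" where
  "vabs x = sup x (- x)"

definition vpos :: "'a::{ordered_real_vector,lattice} \<Rightarrow> 'a" where
  "vpos x = sup x 0"

text \<open>Convergence structures are represented by their (equivalent) filter form:
  eta F x means that the filter F converges to x.  A net (x_alpha) indexed by a
  directed set converges to x iff eta holds for its tail filter (filtermap x at_top).
  Axioms: point filters converge to their point; convergence passes to finer filters
  (this encodes: constant nets converge, subnets of convergent nets converge).\<close>

definition convergence_structure :: "('a filter \<Rightarrow> 'a \<Rightarrow> bool) \<Rightarrow> bool" where
  "convergence_structure eta \<longleftrightarrow>
     (\<forall>x. eta (principal {x}) x) \<and>
     (\<forall>F G x. F \<le> G \<longrightarrow> eta G x \<longrightarrow> eta F x)"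

text \<open>Two nets with the same index set are encoded by one filter P on pairs
  (the tail filter of alpha maps to (e_alpha, f_alpha)).\<close>

definition locally_solid_additive ::
    "('a::{ordered_real_vector,lattice} filter \<Rightarrow> 'a \<Rightarrow> bool) \<Rightarrow> bool" where
  "locally_solid_additive eta \<longleftrightarrow>
     convergence_structure eta \<and>
     (\<forall>(P :: ('a \<times> 'a) filter) x y. eta (filtermap fst P) x \<longrightarrow> eta (filtermap snd P) y \<longrightarrow>
         eta (filtermap (\<lambda>p. fst p + snd p) P) (x + y)) \<and>
     (\<forall>F x. eta F x \<longrightarrow> eta (filtermap uminus F) (- x)) \<and>
     (\<forall>P :: ('a \<times> 'a) filter.
         eventually (\<lambda>p. vabs (fst p) \<le> vabs (snd p)) P \<longrightarrow>
         eta (filtermap snd P) 0 \<longrightarrow> eta (filtermap fst P) 0)"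

text \<open>Idempotency. The net (f_alpha) is encoded by its tail filter F, the net
  (g_beta) by its tail filter G together with its range S (G is concentrated on S).\<close>

definition idempotent_conv ::
    "('a::{ordered_real_vector,lattice} filter \<Rightarrow> 'a \<Rightarrow> bool) \<Rightarrow> bool" where
  "idempotent_conv eta \<longleftrightarrow>
     (\<forall>F G S. F \<noteq> bot \<longrightarrow> G \<noteq> bot \<longrightarrow>
        eventually (\<lambda>x. 0 \<le> x) F \<longrightarrow>
        S \<subseteq> {x. 0 \<le> x} \<longrightarrow> G \<le> principal S \<longrightarrow>
        eta G 0 \<longrightarrow>
        (\<forall>y\<in>S. eta (filtermap (\<lambda>x. vpos (x - y)) F) 0) \<longrightarrow>
        eta F 0)"

definition lattice_ideal :: "'a::{ordered_real_vector,lattice} set \<Rightarrow> bool" where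
  "lattice_ideal H \<longleftrightarrow>
     0 \<in> H \<and> (\<forall>x\<in>H. \<forall>y\<in>H. x + y \<in> H) \<and> (\<forall>c x. x \<in> H \<longrightarrow> c *\<^sub>R x \<in> H) \<and>
     (\<forall>x y. y \<in> H \<longrightarrow> vabs x \<le> vabs y \<longrightarrow> x \<in> H)"

definition conv_closed :: "('a filter \<Rightarrow> 'a \<Rightarrow> bool) \<Rightarrow> 'a set \<Rightarrow> bool" where
  "conv_closed eta H \<longleftrightarrow>
     (\<forall>F x. F \<noteq> bot \<longrightarrow> eventually (\<lambda>y. y \<in> H) F \<longrightarrow> eta F x \<longrightarrow> x \<in> H)"

end

theory Submission
  imports Defs "HOL-Library.Lattice_Algebras"
begin

text \<open>Because \<open>\<bar>x + y\<bar> \<and> f \<le> \<bar>x\<bar> \<and> f + \<bar>y\<bar> \<and> f\<close> for \<open>f \<ge> 0\<close>, local solidity and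
  additivity of \<open>\<eta>\<close> make \<open>H\<close> a solid subspace. For closedness let \<open>h\<^sub>\<gamma> \<rightarrow> x\<close> with
  \<open>h\<^sub>\<gamma> \<in> H\<close> and put \<open>g\<^sub>\<gamma> = \<bar>h\<^sub>\<gamma> - x\<bar> \<rightarrow> 0\<close>. Then
  \<open>(\<bar>x\<bar> \<and> f\<^sub>\<alpha> - g\<^sub>\<gamma>)\<^sup>+ \<le> \<bar>h\<^sub>\<gamma>\<bar> \<and> f\<^sub>\<alpha> \<rightarrow> 0\<close> in \<open>\<alpha>\<close> for each \<open>\<gamma>\<close>, so idempotency
  yields \<open>\<bar>x\<bar> \<and> f\<^sub>\<alpha> \<rightarrow> 0\<close>.\<close>

context lattice_ab_group_add
begin

lemma inf_add_le_add_inf: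
  assumes "0 \<le> a" "0 \<le> b" "0 \<le> c"
  shows "inf (a + b) c \<le> inf a c + inf b c"
proof -
  have "inf a c + inf b c = inf (inf (a + b) (c + b)) (inf (a + c) (c + c))"
    by (simp add: add_inf_distrib_left add_inf_distrib_right)
  then show ?thesis
    using assms by (simp add: add_increasing add_increasing2 le_infI2)
qed

end

context lattice_ab_group_add_abs
begin

lemma inf_abs_le_inf_abs_add_abs_diff:
  assumes "0 \<le> c"
  shows "inf \<bar>a\<bar> c \<le> inf \<bar>b\<bar> c + \<bar>a - b\<bar>"
proof -
  have "\<bar>a\<bar> \<le> \<bar>b\<bar> + \<bar>a - b\<bar>"
    by (metis abs_triangle_ineq add.commute diff_add_cancel)
  then have "inf \<bar>a\<bar> c \<le> inf (\<bar>b\<bar> + \<bar>a - b\<bar>) c"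
    by (simp add: le_infI1)
  also have "\<dots> \<le> inf \<bar>b\<bar> c + inf \<bar>a - b\<bar> c"
    using assms by (simp add: inf_add_le_add_inf)
  also have "\<dots> \<le> inf \<bar>b\<bar> c + \<bar>a - b\<bar>"
    by (simp add: add_left_mono)
  finally show ?thesis .
qed

end

interpretation vector_lattice: lattice_ab_group_add_abs vabs "(+)"
    "0 :: 'a::{ordered_real_vector,lattice}" "(-)" uminus "(\<le>)" "(<)" inf sup
  by unfold_locales (simp_all add: vabs_def add_left_mono)

lemma vabs_scaleR_le: "vabs (c *\<^sub>R x) \<le> \<bar>c\<bar> *\<^sub>R vabs (x::'a::{ordered_real_vector,lattice})"
proof (rule vector_lattice.abs_leI)
  have "\<bar>c\<bar> *\<^sub>R x \<le> \<bar>c\<bar> *\<^sub>R vabs x" "- (\<bar>c\<bar> *\<^sub>R x) \<le> \<bar>c\<bar> *\<^sub>R vabs x"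
    using scaleR_left_mono[OF vector_lattice.abs_ge_self[of x], of "\<bar>c\<bar>"]
      scaleR_left_mono[OF vector_lattice.abs_ge_minus_self[of x], of "\<bar>c\<bar>"]
    by simp_all
  then show "c *\<^sub>R x \<le> \<bar>c\<bar> *\<^sub>R vabs x" "- (c *\<^sub>R x) \<le> \<bar>c\<bar> *\<^sub>R vabs x"
    by (cases "0 \<le> c"; simp)+
qed

lemma vpos_inf_vabs_minus_le:
  fixes x h c :: "'a::{ordered_real_vector,lattice}"
  assumes "0 \<le> c"
  shows "vpos (inf (vabs x) c - vabs (h - x)) \<le> inf (vabs h) c"
proof -
  have "inf (vabs x) c - vabs (h - x) \<le> inf (vabs h) c"
    using vector_lattice.inf_abs_le_inf_abs_add_abs_diff[OF assms, of x h]
    unfolding diff_le_eq vector_lattice.abs_minus_commute[of x h] .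
  then show ?thesis
    using assms unfolding vpos_def by (intro sup_least) simp_all
qed

lemma at_top_neq_bot_if_directed:
  assumes "\<forall>a b::'i::order. \<exists>c. a \<le> c \<and> b \<le> c"
  shows "(at_top :: 'i filter) \<noteq> bot"
proof
  assume "(at_top :: 'i filter) = bot"
  then have "eventually (\<lambda>_. False) (at_top :: 'i filter)"
    by simp
  then have "\<exists>b. eventually (\<lambda>_. False) (principal {b::'i..})"
    unfolding at_top_def
  proof (subst (asm) eventually_INF_base)
    fix a b :: 'i
    obtain c where "a \<le> c" "b \<le> c"
      using assms by blast
    then show "\<exists>x\<in>UNIV. principal {x..} \<le> inf (principal {a..}) (principal {b..})"
      by (intro bexI[of _ c]) auto
  qed auto
  then show False
    by (auto simp: eventually_principal)
qed

definition meet_null_set ::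
    "('a::{ordered_real_vector,lattice} filter \<Rightarrow> 'a \<Rightarrow> bool) \<Rightarrow> 'i filter \<Rightarrow> ('i \<Rightarrow> 'a) \<Rightarrow> 'a set" where
  "meet_null_set eta F f = {h. eta (filtermap (\<lambda>\<alpha>. inf (vabs h) (f \<alpha>)) F) 0}"

context
  fixes eta :: "'a::{ordered_real_vector,lattice} filter \<Rightarrow> 'a \<Rightarrow> bool"
  assumes lsa: "locally_solid_additive eta"
begin

lemma lsa_tendsto_const: "eta (filtermap (\<lambda>_. c) F) c"
proof -
  have "filtermap (\<lambda>_. c) F \<le> principal {c}"
    by (simp add: le_principal eventually_filtermap)
  then show ?thesis
    using lsa unfolding locally_solid_additive_def convergence_structure_def by blast
qed

lemma lsa_tendsto_add:
  assumes "eta (filtermap a F) x" "eta (filtermap b F) y"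
  shows "eta (filtermap (\<lambda>t. a t + b t) F) (x + y)"
proof -
  let ?P = "filtermap (\<lambda>t. (a t, b t)) F"
  have "eta (filtermap fst ?P) x" "eta (filtermap snd ?P) y"
    using assms by (simp_all add: filtermap_filtermap)
  then have "eta (filtermap (\<lambda>p. fst p + snd p) ?P) (x + y)"
    using lsa unfolding locally_solid_additive_def by blast
  then show ?thesis
    by (simp add: filtermap_filtermap)
qed

lemma lsa_tendsto_solid:
  assumes "eventually (\<lambda>t. vabs (a t) \<le> vabs (b t)) F" "eta (filtermap b F) 0"
  shows "eta (filtermap a F) 0"
proof -
  let ?P = "filtermap (\<lambda>t. (a t, b t)) F"
  have "eventually (\<lambda>p. vabs (fst p) \<le> vabs (snd p)) ?P" "eta (filtermap snd ?P) 0"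
    using assms by (simp_all add: filtermap_filtermap eventually_filtermap)
  then have "eta (filtermap fst ?P) 0"
    using lsa unfolding locally_solid_additive_def by blast
  then show ?thesis
    by (simp add: filtermap_filtermap)
qed

lemma lsa_tendsto_squeeze:
  assumes "\<And>t. 0 \<le> a t" "\<And>t. a t \<le> b t" "eta (filtermap b F) 0"
  shows "eta (filtermap a F) 0"
proof (rule lsa_tendsto_solid[OF _ assms(3)])
  show "eventually (\<lambda>t. vabs (a t) \<le> vabs (b t)) F"
    using assms(1,2) by (simp add: order_trans[OF _ vector_lattice.abs_ge_self])
qed

lemma lsa_tendsto_abs_diff:
  assumes "eta F x"
  shows "eta (filtermap (\<lambda>h. vabs (h - x)) F) 0"
proof -
  have "eta (filtermap (\<lambda>h. h + - x) F) (x + - x)"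
    using assms lsa_tendsto_const[of "- x" F] by (intro lsa_tendsto_add) (simp_all add: filtermap_ident)
  then have "eta (filtermap (\<lambda>h. h - x) F) 0"
    by simp
  then show ?thesis
    by (rule lsa_tendsto_solid[rotated]) simp
qed

lemma meet_null_set_solid:
  assumes "\<forall>\<alpha>. 0 \<le> f \<alpha>" "y \<in> meet_null_set eta F f" "vabs x \<le> vabs y"
  shows "x \<in> meet_null_set eta F f"
proof -
  have "eta (filtermap (\<lambda>\<alpha>. inf (vabs x) (f \<alpha>)) F) 0"
  proof (rule lsa_tendsto_squeeze)
    show "0 \<le> inf (vabs x) (f \<alpha>)" for \<alpha>
      using assms(1) by simp
    show "inf (vabs x) (f \<alpha>) \<le> inf (vabs y) (f \<alpha>)" for \<alpha>
      using assms(3) by (rule inf_mono) simp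
    show "eta (filtermap (\<lambda>\<alpha>. inf (vabs y) (f \<alpha>)) F) 0"
      using assms(2) by (simp add: meet_null_set_def)
  qed
  then show ?thesis
    by (simp add: meet_null_set_def)
qed

lemma meet_null_set_add:
  assumes "\<forall>\<alpha>. 0 \<le> f \<alpha>" "x \<in> meet_null_set eta F f" "y \<in> meet_null_set eta F f"
  shows "x + y \<in> meet_null_set eta F f"
proof -
  have "eta (filtermap (\<lambda>\<alpha>. inf (vabs (x + y)) (f \<alpha>)) F) 0"
  proof (rule lsa_tendsto_squeeze)
    show "0 \<le> inf (vabs (x + y)) (f \<alpha>)" for \<alpha>
      using assms(1) by simp
    show "inf (vabs (x + y)) (f \<alpha>) \<le> inf (vabs x) (f \<alpha>) + inf (vabs y) (f \<alpha>)" for \<alpha>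
    proof -
      have "inf (vabs (x + y)) (f \<alpha>) \<le> inf (vabs x + vabs y) (f \<alpha>)"
        using vector_lattice.abs_triangle_ineq by (rule inf_mono) simp
      also have "\<dots> \<le> inf (vabs x) (f \<alpha>) + inf (vabs y) (f \<alpha>)"
        using assms(1) by (simp add: vector_lattice.inf_add_le_add_inf)
      finally show ?thesis .
    qed
    show "eta (filtermap (\<lambda>\<alpha>. inf (vabs x) (f \<alpha>) + inf (vabs y) (f \<alpha>)) F) 0"
      using lsa_tendsto_add assms(2,3) unfolding meet_null_set_def by fastforce
  qed
  then show ?thesis
    by (simp add: meet_null_set_def)
qed

lemma lattice_ideal_meet_null_set:
  assumes f_nonneg: "\<forall>\<alpha>. 0 \<le> f \<alpha>"
  shows "lattice_ideal (meet_null_set eta F f)"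
proof -
  let ?H = "meet_null_set eta F f"
  have zero: "0 \<in> ?H"
    using lsa_tendsto_const[of 0 F] f_nonneg by (simp add: meet_null_set_def inf_absorb1)
  have multiple: "real n *\<^sub>R vabs x \<in> ?H" if "x \<in> ?H" for n x
  proof (induction n)
    case 0
    show ?case
      using zero by simp
  next
    case (Suc n)
    have "vabs x \<in> ?H"
      using f_nonneg that by (rule meet_null_set_solid) simp
    with Suc show ?case
      using f_nonneg by (simp add: scaleR_add_left meet_null_set_add)
  qed
  have scale: "c *\<^sub>R x \<in> ?H" if "x \<in> ?H" for c x
  proof -
    obtain n :: nat where n: "\<bar>c\<bar> \<le> real n"
      using real_arch_simple by blast
    have "vabs (c *\<^sub>R x) \<le> \<bar>c\<bar> *\<^sub>R vabs x"
      by (rule vabs_scaleR_le)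
    also have "\<dots> \<le> real n *\<^sub>R vabs x"
      using n by (simp add: scaleR_right_mono)
    also have "\<dots> = vabs (real n *\<^sub>R vabs x)"
      by (simp add: vector_lattice.abs_of_nonneg scaleR_nonneg_nonneg)
    finally show ?thesis
      using meet_null_set_solid[OF f_nonneg multiple[OF that]] by blast
  qed
  show ?thesis
    unfolding lattice_ideal_def
    using zero scale meet_null_set_add[OF f_nonneg] meet_null_set_solid[OF f_nonneg] by blast
qed

lemma conv_closed_meet_null_set:
  assumes idem: "idempotent_conv eta" and "F \<noteq> bot" and f_nonneg: "\<forall>\<alpha>. 0 \<le> f \<alpha>"
  shows "conv_closed eta (meet_null_set eta F f)"
  unfolding conv_closed_def
proof (intro allI impI)
  let ?H = "meet_null_set eta F f"
  fix G x
  assume "G \<noteq> bot" and G_in_H: "eventually (\<lambda>h. h \<in> ?H) G" and "eta G x"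
  define D where "D = filtermap (\<lambda>h. vabs (h - x)) G"
  define S where "S = (\<lambda>h. vabs (h - x)) ` ?H"
  define M where "M = filtermap (\<lambda>\<alpha>. inf (vabs x) (f \<alpha>)) F"
  have "D \<noteq> bot" "M \<noteq> bot"
    using \<open>G \<noteq> bot\<close> \<open>F \<noteq> bot\<close> by (simp_all add: D_def M_def filtermap_bot_iff)
  moreover have "eventually (\<lambda>m. 0 \<le> m) M"
    using f_nonneg by (simp add: M_def eventually_filtermap)
  moreover have "S \<subseteq> {s. 0 \<le> s}"
    by (auto simp: S_def)
  moreover have "D \<le> principal S"
    unfolding D_def S_def le_principal eventually_filtermap
    using G_in_H by (rule eventually_mono) auto
  moreover have "eta D 0"
    unfolding D_def using \<open>eta G x\<close> by (rule lsa_tendsto_abs_diff)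
  moreover have "eta (filtermap (\<lambda>m. vpos (m - s)) M) 0" if "s \<in> S" for s
  proof -
    obtain h where h: "h \<in> ?H" "s = vabs (h - x)"
      using \<open>s \<in> S\<close> by (auto simp: S_def)
    have "eta (filtermap (\<lambda>\<alpha>. vpos (inf (vabs x) (f \<alpha>) - s)) F) 0"
    proof (rule lsa_tendsto_squeeze)
      show "0 \<le> vpos (inf (vabs x) (f \<alpha>) - s)" for \<alpha>
        by (simp add: vpos_def)
      show "vpos (inf (vabs x) (f \<alpha>) - s) \<le> inf (vabs h) (f \<alpha>)" for \<alpha>
        using vpos_inf_vabs_minus_le f_nonneg h(2) by blast
      show "eta (filtermap (\<lambda>\<alpha>. inf (vabs h) (f \<alpha>)) F) 0"
        using h(1) by (simp add: meet_null_set_def)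
    qed
    then show ?thesis
      by (simp add: M_def filtermap_filtermap)
  qed
  ultimately have "eta M 0"
    using idem unfolding idempotent_conv_def by blast
  then show "x \<in> ?H"
    by (simp add: M_def meet_null_set_def)
qed

end

theorem proposition2p4:
  fixes eta :: "'a::{ordered_real_vector,lattice} filter \<Rightarrow> 'a \<Rightarrow> bool"
    and f :: "'i::order \<Rightarrow> 'a"
  assumes "locally_solid_additive eta"
    and "\<forall>a b::'i. \<exists>c. a \<le> c \<and> b \<le> c"
    and "\<forall>\<alpha>. 0 \<le> f \<alpha>"
  shows "lattice_ideal {h. eta (filtermap (\<lambda>\<alpha>. inf (vabs h) (f \<alpha>)) at_top) 0}
       \<and> (idempotent_conv eta \<longrightarrow>
            conv_closed eta {h. eta (filtermap (\<lambda>\<alpha>. inf (vabs h) (f \<alpha>)) at_top) 0})"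
  using lattice_ideal_meet_null_set[OF assms(1,3)]
    conv_closed_meet_null_set[OF assms(1) _ at_top_neq_bot_if_directed[OF assms(2)] assms(3)]
  unfolding meet_null_set_def by blast

end
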